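(* Assume $\inf_{x\in X}\mu(B_x(1/2))>0$, and let $Z\subset X$ and $N:\mathbb{R}\to\mathbb{N}$ be such that $X=\bigcup_{z\in Z}B_z(1)$ and, for every $x\in X$ and $r\ge1$, the number of $z\in Z$ with $B_z(r)\cap B_x(r)\neq\emptyset$ is at most $N(r)$. Then for every controlled operator $T\in\mathscr{B}(X)$, $$\|T\|\le N(d(T)+1)^{1/2}\sup_{x\in X}\|\mathbf{1}_{B_x(1)}T\|.$$
   Context: $(X,d)$ is a non-compact proper metric space, $B_x(r)=\{y:d(x,y)\le r\}$, and $\mu$ is a Radon measure with support $X$ such that $\mu(B_x(r))>0$ and $\sup_x\mu(B_x(r))<\infty$ for all $r>0$. $\mathscr{B}(X)$ is the algebra of bounded operators on $L^2(X,\mu)$; $\mathbf{1}_A$ is multiplication by the characteristic function of measurable $A$. $T$ is controlled if there is $r>0$ such that $\mathbf{1}_FT\mathbf{1}_G=0$ for all closed $F,G$ with $d(F,G)>r$; $d(T)$ is the smallest such $r$. *)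

theory Defs
  imports "HOL-Analysis.Analysis"
begin

definition L2 :: "'a measure \<Rightarrow> ('a \<Rightarrow> complex) set" where
  "L2 M = {f. f \<in> borel_measurable M \<and> integrable M (\<lambda>x. (cmod (f x))\<^sup>2)}"

definition L2norm :: "'a measure \<Rightarrow> ('a \<Rightarrow> complex) \<Rightarrow> real" where
  "L2norm M f = sqrt (\<integral>x. (cmod (f x))\<^sup>2 \<partial>M)"

definition bounded_op :: "'a measure \<Rightarrow> (('a \<Rightarrow> complex) \<Rightarrow> ('a \<Rightarrow> complex)) \<Rightarrow> bool" where
  "bounded_op M T \<longleftrightarrow>
     (\<forall>f\<in>L2 M. T f \<in> L2 M) \<and>
     (\<forall>f\<in>L2 M. \<forall>g\<in>L2 M. (AE x in M. f x = g x) \<longrightarrow> (AE x in M. T f x = T g x)) \<and>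
     (\<forall>f\<in>L2 M. \<forall>g\<in>L2 M. \<forall>c::complex.
        AE x in M. T (\<lambda>y. f y + c * g y) x = T f x + c * T g x) \<and>
     (\<exists>C. \<forall>f\<in>L2 M. L2norm M (T f) \<le> C * L2norm M f)"

definition op_norm :: "'a measure \<Rightarrow> (('a \<Rightarrow> complex) \<Rightarrow> ('a \<Rightarrow> complex)) \<Rightarrow> real" where
  "op_norm M T = Sup {L2norm M (T f) | f. f \<in> L2 M \<and> L2norm M f \<le> 1}"

definition mult_ind :: "'a set \<Rightarrow> ('a \<Rightarrow> complex) \<Rightarrow> ('a \<Rightarrow> complex)" where
  "mult_ind A f = (\<lambda>x. indicator A x * f x)"

definition cut_zero :: "'a measure \<Rightarrow> 'a set \<Rightarrow> (('a \<Rightarrow> complex) \<Rightarrow> ('a \<Rightarrow> complex)) \<Rightarrow> 'a set \<Rightarrow> bool" where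
  "cut_zero M F T G \<longleftrightarrow> (\<forall>f\<in>L2 M. AE x in M. mult_ind F (T (mult_ind G f)) x = 0)"

definition propagates_within :: "'a::metric_space measure \<Rightarrow> (('a \<Rightarrow> complex) \<Rightarrow> ('a \<Rightarrow> complex)) \<Rightarrow> real \<Rightarrow> bool" where
  "propagates_within M T r \<longleftrightarrow>
     (\<forall>F G. closed F \<and> closed G \<and> setdist F G > r \<longrightarrow> cut_zero M F T G)"

definition controlled :: "'a::metric_space measure \<Rightarrow> (('a \<Rightarrow> complex) \<Rightarrow> ('a \<Rightarrow> complex)) \<Rightarrow> bool" where
  "controlled M T \<longleftrightarrow> (\<exists>r>0. propagates_within M T r)"

definition propagation :: "'a::metric_space measure \<Rightarrow> (('a \<Rightarrow> complex) \<Rightarrow> ('a \<Rightarrow> complex)) \<Rightarrow> real" where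
  "propagation M T = Inf {r. 0 \<le> r \<and> propagates_within M T r}"

end

theory Submission
  imports Defs
begin

text \<open>
  Write d = d(T) and S = sup_x ||1_{B_x(1)} T||. Since the balls B_z(1), z in Z, cover X,
  ||T f||^2 <= sum_z ||1_{B_z(1)} T f||^2. Propagation d gives
  1_{B_z(1)} T f = 1_{B_z(1)} T 1_{B_z(d+1)} f, so each summand is at most S^2 ||1_{B_z(d+1)} f||^2,
  and since every point lies in at most N(d+1) of the balls B_z(d+1), the sum is at most
  N(d+1) S^2 ||f||^2. To avoid infinite sums, T f is first restricted to a ball, which meets
  only finitely many B_z(1), and the bound is then passed to the limit.
\<close>

lemma L2_integrable_sq: "g \<in> L2 M \<Longrightarrow> integrable M (\<lambda>x. (cmod (g x))\<^sup>2)"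
  by (simp add: L2_def)

lemma zero_in_L2: "(\<lambda>_. 0) \<in> L2 M"
  by (simp add: L2_def)

lemma scaleC_in_L2: "g \<in> L2 M \<Longrightarrow> (\<lambda>x. c * g x) \<in> L2 M"
  by (auto simp: L2_def norm_mult power_mult_distrib intro: borel_measurable_times)

lemma mult_ind_in_L2:
  assumes g: "g \<in> L2 M" and B: "B \<in> sets M"
  shows "mult_ind B g \<in> L2 M"
proof -
  have [measurable]: "g \<in> borel_measurable M" "B \<in> sets M"
    using assms by (auto simp: L2_def)
  have "integrable M (\<lambda>x. (cmod (mult_ind B g x))\<^sup>2)"
    by (rule Bochner_Integration.integrable_bound[OF L2_integrable_sq[OF g]])
       (auto simp: mult_ind_def indicator_def)
  then show ?thesis
    by (simp add: L2_def mult_ind_def)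
qed

lemma L2norm_nonneg: "0 \<le> L2norm M g"
  by (simp add: L2norm_def integral_nonneg_AE)

lemma L2norm_sq: "(L2norm M g)\<^sup>2 = (\<integral>x. (cmod (g x))\<^sup>2 \<partial>M)"
  by (simp add: L2norm_def integral_nonneg_AE)

lemma L2norm_scaleC: "L2norm M (\<lambda>x. c * g x) = cmod c * L2norm M g"
  by (simp add: L2norm_def norm_mult power_mult_distrib real_sqrt_mult)

lemma L2norm_cong_AE:
  "u \<in> L2 M \<Longrightarrow> v \<in> L2 M \<Longrightarrow> (AE x in M. u x = v x) \<Longrightarrow> L2norm M u = L2norm M v"
  unfolding L2norm_def by (intro arg_cong[where f=sqrt] integral_cong_AE) (auto simp: L2_def)

lemma L2norm_eq_0_iff_AE: "g \<in> L2 M \<Longrightarrow> L2norm M g = 0 \<longleftrightarrow> (AE x in M. g x = 0)"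
  unfolding L2norm_def
  by (simp add: integral_nonneg_eq_0_iff_AE[OF L2_integrable_sq] integral_nonneg_AE)

lemma L2norm_mult_ind_le:
  assumes "g \<in> L2 M" "B \<in> sets M"
  shows "L2norm M (mult_ind B g) \<le> L2norm M g"
  unfolding L2norm_def
  by (intro real_sqrt_le_mono integral_mono L2_integrable_sq mult_ind_in_L2 assms)
     (auto simp: mult_ind_def indicator_def)

lemma L2norm_mult_ind_tendsto:
  assumes g: "g \<in> L2 M" and meas: "\<And>n. A n \<in> sets M" "B \<in> sets M"
    and lim: "\<And>x. \<forall>\<^sub>F n in sequentially. x \<in> A n \<longleftrightarrow> x \<in> B"
  shows "(\<lambda>n. L2norm M (mult_ind (A n) g)) \<longlonglongrightarrow> L2norm M (mult_ind B g)"
  unfolding L2norm_def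
proof (intro tendsto_real_sqrt integral_dominated_convergence)
  have [measurable]: "g \<in> borel_measurable M" "A n \<in> sets M" "B \<in> sets M" for n
    using g meas by (auto simp: L2_def)
  show "(\<lambda>x. (cmod (mult_ind B g x))\<^sup>2) \<in> borel_measurable M"
    "(\<lambda>x. (cmod (mult_ind (A n) g x))\<^sup>2) \<in> borel_measurable M" for n
    by (simp_all add: mult_ind_def)
  show "integrable M (\<lambda>x. (cmod (g x))\<^sup>2)"
    using g by (rule L2_integrable_sq)
  show "AE x in M. norm ((cmod (mult_ind (A n) g x))\<^sup>2) \<le> (cmod (g x))\<^sup>2" for n
    by (auto simp: mult_ind_def indicator_def)
  show "AE x in M. (\<lambda>n. (cmod (mult_ind (A n) g x))\<^sup>2) \<longlonglongrightarrow> (cmod (mult_ind B g x))\<^sup>2"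
  proof (intro AE_I2 tendsto_eventually)
    fix x
    show "\<forall>\<^sub>F n in sequentially. (cmod (mult_ind (A n) g x))\<^sup>2 = (cmod (mult_ind B g x))\<^sup>2"
      using lim[of x] by eventually_elim (simp add: mult_ind_def indicator_def)
  qed
qed

lemma L2norm_sq_mult_ind_le_sum:
  assumes g: "g \<in> L2 M" and I: "finite I" and B: "\<And>i. i \<in> I \<Longrightarrow> B i \<in> sets M"
    and A: "A \<in> sets M" "A \<subseteq> (\<Union>i\<in>I. B i)"
  shows "(L2norm M (mult_ind A g))\<^sup>2 \<le> (\<Sum>i\<in>I. (L2norm M (mult_ind (B i) g))\<^sup>2)"
proof -
  have int: "integrable M (\<lambda>x. (cmod (mult_ind (B i) g x))\<^sup>2)" if "i \<in> I" for i
    by (simp add: L2_integrable_sq mult_ind_in_L2 g B that)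
  have "(\<integral>x. (cmod (mult_ind A g x))\<^sup>2 \<partial>M) \<le> (\<integral>x. (\<Sum>i\<in>I. (cmod (mult_ind (B i) g x))\<^sup>2) \<partial>M)"
  proof (rule integral_mono)
    show "integrable M (\<lambda>x. (cmod (mult_ind A g x))\<^sup>2)"
      by (intro L2_integrable_sq mult_ind_in_L2 g A)
    show "integrable M (\<lambda>x. \<Sum>i\<in>I. (cmod (mult_ind (B i) g x))\<^sup>2)"
      using int by simp
    fix x
    show "(cmod (mult_ind A g x))\<^sup>2 \<le> (\<Sum>i\<in>I. (cmod (mult_ind (B i) g x))\<^sup>2)"
    proof (cases "x \<in> A")
      case True
      then obtain i where "i \<in> I" "x \<in> B i" using A by blast
      then show ?thesis
        using I \<open>x \<in> A\<close> member_le_sum[of i I "\<lambda>i. (cmod (mult_ind (B i) g x))\<^sup>2"]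
        by (simp add: mult_ind_def)
    qed (simp add: mult_ind_def sum_nonneg)
  qed
  then show ?thesis
    by (simp add: L2norm_sq integral_sum int)
qed

lemma sum_L2norm_sq_mult_ind_le:
  assumes g: "g \<in> L2 M" and I: "finite I" and B: "\<And>i. i \<in> I \<Longrightarrow> B i \<in> sets M"
    and overlap: "\<And>x. card {i\<in>I. x \<in> B i} \<le> K"
  shows "(\<Sum>i\<in>I. (L2norm M (mult_ind (B i) g))\<^sup>2) \<le> real K * (L2norm M g)\<^sup>2"
proof -
  have int: "integrable M (\<lambda>x. (cmod (mult_ind (B i) g x))\<^sup>2)" if "i \<in> I" for i
    by (simp add: L2_integrable_sq mult_ind_in_L2 g B that)
  have "(\<Sum>i\<in>I. (cmod (mult_ind (B i) g x))\<^sup>2) = (\<Sum>i\<in>I. if x \<in> B i then (cmod (g x))\<^sup>2 else 0)" for x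
    by (intro sum.cong) (auto simp: mult_ind_def)
  also have "\<dots> x = card {i\<in>I. x \<in> B i} * (cmod (g x))\<^sup>2" for x
    by (simp flip: sum.inter_filter[OF I])
  finally have pointwise: "(\<Sum>i\<in>I. (cmod (mult_ind (B i) g x))\<^sup>2) = card {i\<in>I. x \<in> B i} * (cmod (g x))\<^sup>2"
    for x .
  have "(\<integral>x. (\<Sum>i\<in>I. (cmod (mult_ind (B i) g x))\<^sup>2) \<partial>M) \<le> (\<integral>x. real K * (cmod (g x))\<^sup>2 \<partial>M)"
  proof (rule integral_mono)
    show "integrable M (\<lambda>x. \<Sum>i\<in>I. (cmod (mult_ind (B i) g x))\<^sup>2)"
      using int by simp
    show "integrable M (\<lambda>x. real K * (cmod (g x))\<^sup>2)"
      using L2_integrable_sq[OF g] by simp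
    show "(\<Sum>i\<in>I. (cmod (mult_ind (B i) g x))\<^sup>2) \<le> real K * (cmod (g x))\<^sup>2" for x
      unfolding pointwise using overlap[of x] by (simp add: mult_right_mono)
  qed
  then show ?thesis
    by (simp add: L2norm_sq integral_sum int)
qed

lemma bounded_op_L2: "bounded_op M T \<Longrightarrow> f \<in> L2 M \<Longrightarrow> T f \<in> L2 M"
  by (simp add: bounded_op_def)

lemma bounded_op_AE_cong:
  "bounded_op M T \<Longrightarrow> f \<in> L2 M \<Longrightarrow> g \<in> L2 M \<Longrightarrow> (AE x in M. f x = g x) \<Longrightarrow>
    AE x in M. T f x = T g x"
  unfolding bounded_op_def by blast

lemma bounded_op_linear:
  "bounded_op M T \<Longrightarrow> f \<in> L2 M \<Longrightarrow> g \<in> L2 M \<Longrightarrow>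
    AE x in M. T (\<lambda>y. f y + c * g y) x = T f x + c * T g x"
  unfolding bounded_op_def by blast

lemma bounded_op_add:
  "bounded_op M T \<Longrightarrow> f \<in> L2 M \<Longrightarrow> g \<in> L2 M \<Longrightarrow> AE x in M. T (\<lambda>y. f y + g y) x = T f x + T g x"
  using bounded_op_linear[of M T f g 1] by simp

lemma bounded_op_zero: "bounded_op M T \<Longrightarrow> AE x in M. T (\<lambda>_. 0) x = 0"
  using bounded_op_add[OF _ zero_in_L2 zero_in_L2] by (auto elim: eventually_mono)

lemma bounded_op_scaleC:
  assumes "bounded_op M T" "g \<in> L2 M"
  shows "AE x in M. T (\<lambda>y. c * g y) x = c * T g x"
  using bounded_op_linear[OF assms(1) zero_in_L2 assms(2), of c] bounded_op_zero[OF assms(1)]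
  by eventually_elim simp

lemma bounded_op_mult_ind_Un:
  assumes T: "bounded_op M T" and g: "g \<in> L2 M"
    and AB: "A \<in> sets M" "B \<in> sets M" "A \<inter> B = {}"
  shows "AE x in M. T (mult_ind (A \<union> B) g) x = T (mult_ind A g) x + T (mult_ind B g) x"
proof -
  have "mult_ind (A \<union> B) g = (\<lambda>y. mult_ind A g y + mult_ind B g y)"
    using AB(3) by (auto simp: mult_ind_def indicator_def fun_eq_iff)
  then show ?thesis
    by (simp add: bounded_op_add[OF T] mult_ind_in_L2[OF g] AB)
qed

lemma bounded_op_mult_ind:
  assumes T: "bounded_op M T" and B: "B \<in> sets M"
  shows "bounded_op M (\<lambda>f. mult_ind B (T f))"
  unfolding bounded_op_def
proof (intro conjI ballI allI impI)
  fix f g c assume f: "f \<in> L2 M" and g: "g \<in> L2 M"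
  show "mult_ind B (T f) \<in> L2 M"
    by (intro mult_ind_in_L2 bounded_op_L2[OF T f] B)
  show "AE x in M. mult_ind B (T (\<lambda>y. f y + c * g y)) x = mult_ind B (T f) x + c * mult_ind B (T g) x"
    using bounded_op_linear[OF T f g, where c=c] by eventually_elim (simp add: mult_ind_def algebra_simps)
  assume "AE x in M. f x = g x"
  then have "AE x in M. T f x = T g x"
    by (rule bounded_op_AE_cong[OF T f g])
  then show "AE x in M. mult_ind B (T f) x = mult_ind B (T g) x"
    by eventually_elim (simp add: mult_ind_def)
next
  obtain C where C: "\<forall>f\<in>L2 M. L2norm M (T f) \<le> C * L2norm M f"
    using T unfolding bounded_op_def by blast
  have "L2norm M (mult_ind B (T f)) \<le> C * L2norm M f" if "f \<in> L2 M" for f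
    using L2norm_mult_ind_le[OF bounded_op_L2[OF T that] B] C that by fastforce
  then show "\<exists>C. \<forall>f\<in>L2 M. L2norm M (mult_ind B (T f)) \<le> C * L2norm M f"
    by blast
qed

lemma op_norm_bdd_above:
  assumes "bounded_op M A"
  shows "bdd_above {L2norm M (A f) | f. f \<in> L2 M \<and> L2norm M f \<le> 1}"
proof -
  obtain C where C: "\<forall>f\<in>L2 M. L2norm M (A f) \<le> C * L2norm M f"
    using assms unfolding bounded_op_def by blast
  have "L2norm M (A f) \<le> max C 0" if "f \<in> L2 M" "L2norm M f \<le> 1" for f
  proof -
    have "L2norm M (A f) \<le> max C 0 * L2norm M f"
      using C that(1) L2norm_nonneg[of M f] by (meson max.cobounded1 mult_right_mono order_trans)
    also have "\<dots> \<le> max C 0"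
      using that(2) L2norm_nonneg[of M f] by (simp add: mult_left_le)
    finally show ?thesis .
  qed
  then show ?thesis
    by (auto intro!: bdd_aboveI)
qed

lemma L2norm_le_op_norm:
  "bounded_op M A \<Longrightarrow> f \<in> L2 M \<Longrightarrow> L2norm M f \<le> 1 \<Longrightarrow> L2norm M (A f) \<le> op_norm M A"
  unfolding op_norm_def by (rule cSup_upper[OF _ op_norm_bdd_above]) auto

lemma op_norm_nonneg:
  assumes "bounded_op M A"
  shows "0 \<le> op_norm M A"
proof -
  have "L2norm M (A (\<lambda>_. 0)) \<le> op_norm M A"
    by (rule L2norm_le_op_norm[OF assms zero_in_L2]) (simp add: L2norm_def)
  then show ?thesis
    by (rule order_trans[OF L2norm_nonneg])
qed

lemma op_norm_le:
  assumes "0 \<le> K" and bound: "\<And>f. f \<in> L2 M \<Longrightarrow> L2norm M (A f) \<le> K * L2norm M f"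
  shows "op_norm M A \<le> K"
  unfolding op_norm_def
proof (rule cSup_least)
  show "{L2norm M (A f) | f. f \<in> L2 M \<and> L2norm M f \<le> 1} \<noteq> {}"
    using zero_in_L2 by (force simp: L2norm_def)
  fix y assume "y \<in> {L2norm M (A f) | f. f \<in> L2 M \<and> L2norm M f \<le> 1}"
  then obtain f where "f \<in> L2 M" "L2norm M f \<le> 1" "y = L2norm M (A f)"
    by blast
  moreover have "K * L2norm M f \<le> K"
    using \<open>L2norm M f \<le> 1\<close> \<open>0 \<le> K\<close> by (rule mult_left_le)
  ultimately show "y \<le> K"
    using bound[of f] by linarith
qed

lemma L2norm_op_le:
  assumes A: "bounded_op M A" and g: "g \<in> L2 M"
  shows "L2norm M (A g) \<le> op_norm M A * L2norm M g"
proof (cases "L2norm M g = 0")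
  case True
  then have "AE x in M. g x = 0"
    using L2norm_eq_0_iff_AE[OF g] by simp
  then have "AE x in M. A g x = A (\<lambda>_. 0) x"
    by (rule bounded_op_AE_cong[OF A g zero_in_L2])
  then have "AE x in M. A g x = 0"
    using bounded_op_zero[OF A] by eventually_elim simp
  then show ?thesis
    using True L2norm_eq_0_iff_AE[OF bounded_op_L2[OF A g]] by simp
next
  case False
  define c where "c = L2norm M g"
  have "c > 0"
    using False L2norm_nonneg[of M g] by (simp add: c_def)
  let ?g = "\<lambda>x. complex_of_real (1 / c) * g x"
  have g': "?g \<in> L2 M"
    by (rule scaleC_in_L2[OF g])
  have "L2norm M (A ?g) = L2norm M (\<lambda>x. complex_of_real (1 / c) * A g x)"
    by (intro L2norm_cong_AE bounded_op_L2[OF A] scaleC_in_L2 g g' bounded_op_scaleC[OF A g])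
  also have "\<dots> = L2norm M (A g) / c"
    unfolding L2norm_scaleC using \<open>c > 0\<close> by (simp add: norm_divide)
  finally have "L2norm M (A g) / c \<le> op_norm M A"
    using L2norm_le_op_norm[OF A g'] \<open>c > 0\<close> unfolding L2norm_scaleC c_def by (simp add: norm_divide)
  then show ?thesis
    using \<open>c > 0\<close> by (simp add: c_def field_simps)
qed

lemma op_norm_mult_ind_le:
  assumes "bounded_op M T" "B \<in> sets M"
  shows "op_norm M (\<lambda>f. mult_ind B (T f)) \<le> op_norm M T"
proof (rule op_norm_le[OF op_norm_nonneg[OF assms(1)]])
  fix f assume "f \<in> L2 M"
  then show "L2norm M (mult_ind B (T f)) \<le> op_norm M T * L2norm M f"
    using L2norm_mult_ind_le[OF bounded_op_L2[OF assms(1)] assms(2)] L2norm_op_le[OF assms(1)]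
    by (blast intro: order_trans)
qed

lemma propagation_nonneg: "controlled M T \<Longrightarrow> 0 \<le> propagation M T"
  unfolding controlled_def propagation_def by (auto intro!: cInf_greatest)

lemma propagates_within_propagation:
  assumes "controlled M T"
  shows "propagates_within M T (propagation M T)"
  unfolding propagates_within_def
proof (intro allI impI)
  let ?R = "{r. 0 \<le> r \<and> propagates_within M T r}"
  fix F G :: "'a set"
  assume FG: "closed F \<and> closed G \<and> propagation M T < setdist F G"
  have "?R \<noteq> {}"
    using assms unfolding controlled_def by (auto intro: less_imp_le)
  then obtain r where "r \<in> ?R" "r < setdist F G"
    using FG cInf_lessD[of ?R] unfolding propagation_def by blast
  then show "cut_zero M F T G"
    using FG unfolding propagates_within_def by blast
qed

lemma cut_zero_cball_far:
  fixes z :: "'a::metric_space"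
  assumes T: "bounded_op M T" and pw: "propagates_within M T d"
    and r: "0 \<le> r" and far: "d < s - r"
  shows "cut_zero M (cball z r) T {y. s \<le> dist z y}"
proof (cases "{y. s \<le> dist z y} = {}")
  case True
  then show ?thesis
    using bounded_op_zero[OF T] by (auto simp: cut_zero_def mult_ind_def elim: eventually_mono)
next
  case False
  have "s - r \<le> setdist (cball z r) {y. s \<le> dist z y}"
  proof (rule iffD2[OF le_setdist_iff], intro conjI ballI impI)
    fix x y assume "x \<in> cball z r" "y \<in> {y. s \<le> dist z y}"
    then show "s - r \<le> dist x y"
      using dist_triangle[of z y x] by (simp add: dist_commute)
  qed (use False r in auto)
  then have "d < setdist (cball z r) {y. s \<le> dist z y}"
    using far by linarith
  moreover have "closed {y. s \<le> dist z y}"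
    by (intro closed_Collect_le continuous_intros)
  ultimately show ?thesis
    using pw closed_cball unfolding propagates_within_def by blast
qed

lemma L2norm_mult_ind_shell_tendsto_0:
  fixes M :: "'a::metric_space measure"
  assumes sets: "sets M = sets borel" and g: "g \<in> L2 M"
  shows "(\<lambda>n. L2norm M (mult_ind {y. s < dist z y \<and> dist z y < s + 1 / (real n + 1)} g)) \<longlonglongrightarrow> 0"
proof -
  let ?shell = "\<lambda>n::nat. {y. s < dist z y \<and> dist z y < s + 1 / (real n + 1)}"
  have "(\<lambda>n. L2norm M (mult_ind (?shell n) g)) \<longlonglongrightarrow> L2norm M (mult_ind {} g)"
  proof (rule L2norm_mult_ind_tendsto[OF g])
    show "?shell n \<in> sets M" for n
      unfolding sets by (intro borel_open open_Collect_conj open_Collect_less continuous_intros)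
    fix x
    show "\<forall>\<^sub>F n in sequentially. x \<in> ?shell n \<longleftrightarrow> x \<in> {}"
    proof (cases "s < dist z x")
      case True
      then obtain n where n: "1 / (real n + 1) < dist z x - s"
        by (metis diff_gt_0_iff_gt inverse_eq_divide reals_Archimedean of_nat_Suc add.commute)
      have "x \<notin> ?shell m" if "n \<le> m" for m
      proof -
        have "1 / (real m + 1) \<le> 1 / (real n + 1)"
          using that by (intro divide_left_mono) auto
        then show ?thesis
          using n by simp
      qed
      then show ?thesis
        by (intro eventually_sequentiallyI[of n]) simp
    qed simp
  qed simp
  then show ?thesis
    by (simp add: mult_ind_def L2norm_def)
qed

lemma propagates_within_cball_locality:
  fixes M :: "'a::metric_space measure" and z :: 'a
  assumes sets: "sets M = sets borel" and T: "bounded_op M T"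
    and pw: "propagates_within M T d" and d: "0 \<le> d" and r: "0 \<le> r" and g: "g \<in> L2 M"
  shows "AE x in M. mult_ind (cball z r) (T g) x = mult_ind (cball z r) (T (mult_ind (cball z (r + d)) g)) x"
proof -
  txt \<open>The complement G of cball z (r + d) may have distance exactly d from cball z r, so
    propagation d does not apply to it directly: G is split into a part at distance > d and a
    thin shell whose contribution vanishes in the limit.\<close>
  define F where "F = cball z r"
  define G where "G = - cball z (r + d)"
  define \<epsilon> where "\<epsilon> n = 1 / (real n + 1)" for n :: nat
  define far where "far n = {y. r + d + \<epsilon> n \<le> dist z y}" for n
  define shell where "shell n = {y. r + d < dist z y \<and> dist z y < r + d + \<epsilon> n}" for n
  have [measurable]: "F \<in> sets M" "G \<in> sets M" "cball z (r + d) \<in> sets M" "far n \<in> sets M" for n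
    unfolding F_def G_def far_def sets
    by (auto intro!: borel_closed borel_comp closed_Collect_le continuous_intros)
  have [measurable]: "shell n \<in> sets M" for n
    unfolding shell_def sets
    by (intro borel_open open_Collect_conj open_Collect_less continuous_intros)
  have L2: "mult_ind A g \<in> L2 M" if "A \<in> sets M" for A
    using g that by (rule mult_ind_in_L2)
  have far_zero: "AE x in M. mult_ind F (T (mult_ind (far n) g)) x = 0" for n
    using cut_zero_cball_far[OF T pw r, of "r + d + \<epsilon> n" z] g
    unfolding cut_zero_def F_def far_def \<epsilon>_def by auto
  have split: "AE x in M. T (mult_ind G g) x = T (mult_ind (far n) g) x + T (mult_ind (shell n) g) x" for n
  proof -
    have "0 < \<epsilon> n"
      by (simp add: \<epsilon>_def)
    then have "G = far n \<union> shell n" "far n \<inter> shell n = {}"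
      unfolding G_def far_def shell_def by auto
    then show ?thesis
      using bounded_op_mult_ind_Un[OF T g, of "far n" "shell n"] by simp
  qed
  have near: "AE x in M. mult_ind F (T (mult_ind G g)) x = mult_ind F (T (mult_ind (shell n) g)) x" for n
    using far_zero[of n] split[of n] by eventually_elim (simp add: mult_ind_def algebra_simps)
  have "L2norm M (mult_ind F (T (mult_ind G g))) \<le> op_norm M (\<lambda>f. mult_ind F (T f)) * L2norm M (mult_ind (shell n) g)"
    for n
    using L2norm_cong_AE[OF _ _ near[of n]] L2norm_op_le[OF bounded_op_mult_ind[OF T] L2]
    by (simp add: mult_ind_in_L2 bounded_op_L2[OF T] L2)
  moreover have "(\<lambda>n. L2norm M (mult_ind (shell n) g)) \<longlonglongrightarrow> 0"
    unfolding shell_def \<epsilon>_def by (rule L2norm_mult_ind_shell_tendsto_0[OF sets g])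
  ultimately have "L2norm M (mult_ind F (T (mult_ind G g))) \<le> 0"
    using LIMSEQ_le_const[OF tendsto_mult_right_zero] by blast
  then have "AE x in M. mult_ind F (T (mult_ind G g)) x = 0"
    using L2norm_nonneg L2norm_eq_0_iff_AE[OF mult_ind_in_L2[OF bounded_op_L2[OF T L2]]]
    by (metis antisym \<open>F \<in> sets M\<close> \<open>G \<in> sets M\<close>)
  moreover have "mult_ind (cball z (r + d) \<union> G) g = g"
    unfolding G_def by (simp add: mult_ind_def)
  then have "AE x in M. T g x = T (mult_ind (cball z (r + d)) g) x + T (mult_ind G g) x"
    using bounded_op_mult_ind_Un[OF T g \<open>cball z (r + d) \<in> sets M\<close> \<open>G \<in> sets M\<close>]
    by (simp add: G_def)
  ultimately show ?thesis
    unfolding F_def by eventually_elim (simp add: mult_ind_def algebra_simps)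
qed

lemma L2norm_le_of_cball_bound:
  fixes M :: "'a::metric_space measure"
  assumes sets: "sets M = sets borel" and g: "g \<in> L2 M"
    and bound: "\<And>\<rho>. L2norm M (mult_ind (cball x0 \<rho>) g) \<le> c"
  shows "L2norm M g \<le> c"
proof -
  have "(\<lambda>n. L2norm M (mult_ind (cball x0 (real n)) g)) \<longlonglongrightarrow> L2norm M (mult_ind UNIV g)"
  proof (rule L2norm_mult_ind_tendsto[OF g])
    fix x
    obtain n :: nat where "dist x0 x \<le> real n"
      using real_arch_simple by blast
    then show "\<forall>\<^sub>F n in sequentially. x \<in> cball x0 (real n) \<longleftrightarrow> x \<in> UNIV"
      by (intro eventually_sequentiallyI[of n]) (simp add: order_trans)
  qed (auto simp: sets)
  then show ?thesis
    using bound by (auto simp: mult_ind_def intro: LIMSEQ_le_const2)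
qed

lemma L2norm_sq_mult_ind_cball_le:
  fixes M :: "'a::metric_space measure" and Z :: "'a set" and x0 :: 'a
  assumes sets: "sets M = sets borel" and T: "bounded_op M T"
    and pw: "propagates_within M T d" and d: "0 \<le> d"
    and cover: "\<And>x. \<exists>z\<in>Z. x \<in> cball z 1"
    and locally_finite: "\<And>x r. finite {z\<in>Z. dist x z \<le> r}"
    and overlap: "\<And>x. card {z\<in>Z. x \<in> cball z (d + 1)} \<le> K"
    and local_norm: "\<And>z. op_norm M (\<lambda>f. mult_ind (cball z 1) (T f)) \<le> S"
    and f: "f \<in> L2 M"
  shows "(L2norm M (mult_ind (cball x0 \<rho>) (T f)))\<^sup>2 \<le> K * S\<^sup>2 * (L2norm M f)\<^sup>2"
proof -
  have [measurable]: "cball x r \<in> sets M" for x r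
    by (simp add: sets)
  define Z\<rho> where "Z\<rho> = {z\<in>Z. dist x0 z \<le> \<rho> + 1}"
  have fin: "finite Z\<rho>"
    unfolding Z\<rho>_def by (rule locally_finite)
  have "cball x0 \<rho> \<subseteq> (\<Union>z\<in>Z\<rho>. cball z 1)"
  proof
    fix x assume "x \<in> cball x0 \<rho>"
    moreover obtain z where "z \<in> Z" "x \<in> cball z 1"
      using cover by blast
    ultimately show "x \<in> (\<Union>z\<in>Z\<rho>. cball z 1)"
      using dist_triangle[of x0 z x] unfolding Z\<rho>_def by (auto simp: dist_commute)
  qed
  then have "(L2norm M (mult_ind (cball x0 \<rho>) (T f)))\<^sup>2 \<le> (\<Sum>z\<in>Z\<rho>. (L2norm M (mult_ind (cball z 1) (T f)))\<^sup>2)"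
    by (intro L2norm_sq_mult_ind_le_sum bounded_op_L2[OF T f] fin) auto
  also have "\<dots> \<le> (\<Sum>z\<in>Z\<rho>. S\<^sup>2 * (L2norm M (mult_ind (cball z (1 + d)) f))\<^sup>2)"
  proof (rule sum_mono)
    fix z
    have "L2norm M (mult_ind (cball z 1) (T f)) = L2norm M (mult_ind (cball z 1) (T (mult_ind (cball z (1 + d)) f)))"
      by (intro L2norm_cong_AE propagates_within_cball_locality[OF sets T pw d _ f] mult_ind_in_L2 bounded_op_L2[OF T] f) auto
    also have "\<dots> \<le> S * L2norm M (mult_ind (cball z (1 + d)) f)"
      using L2norm_op_le[OF bounded_op_mult_ind[OF T] mult_ind_in_L2[OF f]]
        mult_right_mono[OF local_norm[of z] L2norm_nonneg]
      by (rule order_trans) auto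
    finally have "(L2norm M (mult_ind (cball z 1) (T f)))\<^sup>2 \<le> (S * L2norm M (mult_ind (cball z (1 + d)) f))\<^sup>2"
      by (rule power_mono[OF _ L2norm_nonneg])
    then show "(L2norm M (mult_ind (cball z 1) (T f)))\<^sup>2 \<le> S\<^sup>2 * (L2norm M (mult_ind (cball z (1 + d)) f))\<^sup>2"
      by (simp add: power_mult_distrib)
  qed
  also have "\<dots> = S\<^sup>2 * (\<Sum>z\<in>Z\<rho>. (L2norm M (mult_ind (cball z (1 + d)) f))\<^sup>2)"
    by (simp add: sum_distrib_left)
  also have "\<dots> \<le> S\<^sup>2 * (K * (L2norm M f)\<^sup>2)"
  proof (intro mult_left_mono sum_L2norm_sq_mult_ind_le f fin)
    fix x
    have "{z\<in>Z\<rho>. x \<in> cball z (1 + d)} \<subseteq> {z\<in>Z. x \<in> cball z (d + 1)}"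
      unfolding Z\<rho>_def by (auto simp: add.commute)
    moreover have "finite {z\<in>Z. x \<in> cball z (d + 1)}"
      using locally_finite[of x "d + 1"] by (simp add: dist_commute)
    ultimately show "card {z\<in>Z\<rho>. x \<in> cball z (1 + d)} \<le> K"
      using overlap[of x] card_mono le_trans by blast
  qed auto
  finally show ?thesis
    by (simp add: algebra_simps)
qed

lemma op_norm_le_local_norms:
  fixes M :: "'a::metric_space measure" and Z :: "'a set"
  assumes sets: "sets M = sets borel" and T: "bounded_op M T"
    and pw: "propagates_within M T d" and d: "0 \<le> d"
    and cover: "\<And>x. \<exists>z\<in>Z. x \<in> cball z 1"
    and locally_finite: "\<And>x r. finite {z\<in>Z. dist x z \<le> r}"
    and overlap: "\<And>x. card {z\<in>Z. x \<in> cball z (d + 1)} \<le> K"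
    and local_norm: "\<And>z. op_norm M (\<lambda>f. mult_ind (cball z 1) (T f)) \<le> S"
  shows "op_norm M T \<le> sqrt K * S"
proof (rule op_norm_le)
  fix x0 :: 'a
  have "0 \<le> S"
    using local_norm[of x0] op_norm_nonneg[OF bounded_op_mult_ind[OF T], of "cball x0 1"]
    by (simp add: sets)
  then show "0 \<le> sqrt K * S"
    by simp
  fix f assume f: "f \<in> L2 M"
  show "L2norm M (T f) \<le> sqrt K * S * L2norm M f"
  proof (rule L2norm_le_of_cball_bound[OF sets bounded_op_L2[OF T f]])
    fix \<rho>
    have "(L2norm M (mult_ind (cball x0 \<rho>) (T f)))\<^sup>2 \<le> (sqrt K * S * L2norm M f)\<^sup>2"
      using L2norm_sq_mult_ind_cball_le[OF assms f] by (simp add: power_mult_distrib)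
    then show "L2norm M (mult_ind (cball x0 \<rho>) (T f)) \<le> sqrt K * S * L2norm M f"
      by (rule power2_le_imp_le) (simp add: \<open>0 \<le> S\<close> L2norm_nonneg)
  qed
qed

lemma
  fixes Z :: "'a::metric_space set" and N :: "real \<Rightarrow> nat"
  assumes count: "\<And>x r. r \<ge> 1 \<Longrightarrow>
      finite {z\<in>Z. cball z r \<inter> cball x r \<noteq> {}} \<and> card {z\<in>Z. cball z r \<inter> cball x r \<noteq> {}} \<le> N r"
  shows finite_centres_near: "finite {z\<in>Z. dist x z \<le> r}"
    and card_centres_covering_le: "1 \<le> r \<Longrightarrow> card {z\<in>Z. x \<in> cball z r} \<le> N r"
proof -
  let ?near = "\<lambda>r. {z\<in>Z. cball z r \<inter> cball x r \<noteq> {}}"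
  have near: "{z\<in>Z. dist x z \<le> r} \<subseteq> ?near r" if "0 \<le> r" for r
  proof -
    have "x \<in> cball z r \<inter> cball x r" if "dist x z \<le> r" for z
      using that \<open>0 \<le> r\<close> by (simp add: dist_commute)
    then show ?thesis
      by blast
  qed
  show "finite {z\<in>Z. dist x z \<le> r}"
  proof (rule finite_subset)
    show "{z\<in>Z. dist x z \<le> r} \<subseteq> ?near (max 1 r)"
      using near[of "max 1 r"] by force
    show "finite (?near (max 1 r))"
      using count[of "max 1 r" x] by simp
  qed
  assume "1 \<le> r"
  then have "card {z\<in>Z. x \<in> cball z r} \<le> card (?near r)"
    using near[of r] count[of r x] by (intro card_mono) (auto simp: dist_commute)
  also have "\<dots> \<le> N r"
    using count[OF \<open>1 \<le> r\<close>] by simp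
  finally show "card {z\<in>Z. x \<in> cball z r} \<le> N r" .
qed

theorem lemma3p6:
  fixes \<mu> :: "'a::heine_borel measure"
    and Z :: "'a set"
    and N :: "real \<Rightarrow> nat"
    and T :: "('a \<Rightarrow> complex) \<Rightarrow> ('a \<Rightarrow> complex)"
  assumes noncompact: "\<not> compact (UNIV :: 'a set)"
    and space: "space \<mu> = UNIV"
    and sets: "sets \<mu> = sets borel"
    and support: "\<And>x r. r > 0 \<Longrightarrow> emeasure \<mu> (ball x r) > 0"
    and ball_pos: "\<And>x r. r > 0 \<Longrightarrow> measure \<mu> (cball x r) > 0"
    and ball_bdd: "\<And>r. r > 0 \<Longrightarrow> \<exists>C::real. \<forall>x. emeasure \<mu> (cball x r) \<le> ennreal C"
    and inf_half: "\<exists>c>0. \<forall>x. measure \<mu> (cball x (1/2)) \<ge> c"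
    and cover: "\<And>x. \<exists>z\<in>Z. x \<in> cball z 1"
    and count: "\<And>x r. r \<ge> 1 \<Longrightarrow>
        finite {z\<in>Z. cball z r \<inter> cball x r \<noteq> {}} \<and>
        card {z\<in>Z. cball z r \<inter> cball x r \<noteq> {}} \<le> N r"
    and bounded: "bounded_op \<mu> T"
    and ctrl: "controlled \<mu> T"
  shows "op_norm \<mu> T \<le>
    sqrt (real (N (propagation \<mu> T + 1))) *
      (SUP x. op_norm \<mu> (\<lambda>f. mult_ind (cball x 1) (T f)))"
proof (rule op_norm_le_local_norms[OF sets bounded propagates_within_propagation[OF ctrl]
      propagation_nonneg[OF ctrl] cover finite_centres_near[OF count] card_centres_covering_le[OF count]])
  show "1 \<le> propagation \<mu> T + 1"
    using propagation_nonneg[OF ctrl] by simp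
  have "op_norm \<mu> (\<lambda>f. mult_ind (cball x 1) (T f)) \<le> op_norm \<mu> T" for x
    by (rule op_norm_mult_ind_le[OF bounded]) (simp add: sets)
  then show "op_norm \<mu> (\<lambda>f. mult_ind (cball z 1) (T f)) \<le> (SUP x. op_norm \<mu> (\<lambda>f. mult_ind (cball x 1) (T f)))" for z
    by (intro cSUP_upper bdd_aboveI2) auto
qed

end
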